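(* Let $E_1$ and $E_2$ be balanced equations in the unknowns $x_1,x_2,x_3$, and write $t_{jk}=t_{jk}^{E_1,E_2}$. Then there is a polynomial $t\in\mathbb Z[X_1,X_2,X_3]$ with $$(t_{23},t_{31},t_{12})=t\,(X_1-1,X_2-1,X_3-1).$$
   Context: An equation is a pair $E=(u,v)$ of words over $\{x_1,x_2,x_3\}$; it is balanced if $|u|_x=|v|_x$ for every unknown $x$. For $E=(x_{i_1}\cdots x_{i_r},\,x_{j_1}\cdots x_{j_s})$, $S_{E,x_j}=\sum_{a:\,i_a=j}\prod_{t=1}^{a-1}X_{i_t}-\sum_{a:\,j_a=j}\prod_{t=1}^{a-1}X_{j_t}\in\mathbb Z[X_1,X_2,X_3]$ (empty product $=1$), and $t_{jk}^{E,E'}=S_{E,x_j}S_{E',x_k}-S_{E',x_j}S_{E,x_k}$. *)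

theory Defs
  imports "HOL-Computational_Algebra.Polynomial"
begin

datatype unknown = x1 | x2 | x3

text \<open>Z[X1,X2,X3] represented as ((Z[X1])[X2])[X3].\<close>
type_synonym mpoly3 = "int poly poly poly"

definition X1 :: mpoly3 where "X1 = [:[:[:0, 1:]:]:]"
definition X2 :: mpoly3 where "X2 = [:[:0, 1:]:]"
definition X3 :: mpoly3 where "X3 = [:0, 1:]"

fun Xv :: "unknown \<Rightarrow> mpoly3" where
  "Xv x1 = X1" | "Xv x2 = X2" | "Xv x3 = X3"

type_synonym equation = "unknown list \<times> unknown list"

definition balanced :: "equation \<Rightarrow> bool" where
  "balanced E \<longleftrightarrow> (\<forall>x. count_list (fst E) x = count_list (snd E) x)"

definition Sw :: "unknown list \<Rightarrow> unknown \<Rightarrow> mpoly3" where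
  "Sw w x = (\<Sum>a<length w. if w ! a = x then prod_list (map Xv (take a w)) else 0)"

definition S :: "equation \<Rightarrow> unknown \<Rightarrow> mpoly3" where
  "S E x = Sw (fst E) x - Sw (snd E) x"

definition tt :: "unknown \<Rightarrow> unknown \<Rightarrow> equation \<Rightarrow> equation \<Rightarrow> mpoly3" where
  "tt j k E E' = S E j * S E' k - S E' j * S E k"

end

theory Submission
  imports Defs "HOL-Computational_Algebra.Polynomial_Factorial"
begin

(* Write a = (X1 - 1, X2 - 1, X3 - 1).  For a word w, the vector
   (Sw w x1, Sw w x2, Sw w x3) satisfies the telescoping identity
     Sw w x1 (X1 - 1) + Sw w x2 (X2 - 1) + Sw w x3 (X3 - 1) = X_w - 1,
   where X_w is the product of the variables along w.  For a balanced equation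
   both sides have the same product, so the vector S_E = (S E x1, S E x2, S E x3)
   is orthogonal to a.  The vector (t23, t31, t12) is the cross product of S_E1
   and S_E2; in any commutative ring, the cross product c of two vectors
   orthogonal to a satisfies a1 c2 = a2 c1 and a1 c3 = a3 c1.  Finally, X1 - 1
   is a prime element of Z[X1,X2,X3] not dividing X2 - 1, so X1 - 1 divides c1,
   say c1 = t (X1 - 1), and cancelling X1 - 1 gives c2 = t (X2 - 1) and
   c3 = t (X3 - 1). *)

lemma Sw_snoc:
  "Sw (w @ [y]) x = Sw w x + (if y = x then prod_list (map Xv w) else 0)"
proof -
  have "(\<Sum>a<length w. if (w @ [y]) ! a = x then prod_list (map Xv (take a (w @ [y]))) else 0)
      = (\<Sum>a<length w. if w ! a = x then prod_list (map Xv (take a w)) else 0)"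
    by (intro sum.cong) (auto simp: nth_append)
  then show ?thesis unfolding Sw_def by (simp add: nth_append)
qed

text \<open>Fox-derivative style telescoping: the weighted sum of the Sw w x collapses
  to the monomial of w minus one.\<close>
lemma Sw_telescope:
  "Sw w x1 * (X1 - 1) + Sw w x2 * (X2 - 1) + Sw w x3 * (X3 - 1) = prod_list (map Xv w) - 1"
proof (induction w rule: rev_induct)
  case Nil
  then show ?case by (simp add: Sw_def)
next
  case (snoc y w)
  then show ?case by (cases y) (auto simp: Sw_snoc algebra_simps)
qed

lemma balanced_prod_eq:
  assumes "balanced E"
  shows "prod_list (map Xv (fst E)) = prod_list (map Xv (snd E))"
proof -
  have "mset (fst E) = mset (snd E)"
    using assms unfolding balanced_def by (simp add: multiset_eq_iff count_mset)
  then show ?thesis by (metis mset_map prod_mset_prod_list)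
qed

lemma balanced_S_orthogonal:
  assumes "balanced E"
  shows "S E x1 * (X1 - 1) + S E x2 * (X2 - 1) + S E x3 * (X3 - 1) = 0"
proof -
  have "S E x1 * (X1 - 1) + S E x2 * (X2 - 1) + S E x3 * (X3 - 1)
     = (Sw (fst E) x1 * (X1 - 1) + Sw (fst E) x2 * (X2 - 1) + Sw (fst E) x3 * (X3 - 1))
      - (Sw (snd E) x1 * (X1 - 1) + Sw (snd E) x2 * (X2 - 1) + Sw (snd E) x3 * (X3 - 1))"
    unfolding S_def by (simp add: algebra_simps)
  also have "\<dots> = 0"
    unfolding Sw_telescope using balanced_prod_eq[OF assms] by simp
  finally show ?thesis .
qed

lemma cross_product_proportional:
  fixes a1 a2 a3 s1 s2 s3 r1 r2 r3 :: "'a :: comm_ring"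
  assumes "s1 * a1 + s2 * a2 + s3 * a3 = 0" and "r1 * a1 + r2 * a2 + r3 * a3 = 0"
  shows "a1 * (s3 * r1 - s1 * r3) = a2 * (s2 * r3 - s3 * r2)"
    and "a1 * (s1 * r2 - s2 * r1) = a3 * (s2 * r3 - s3 * r2)"
proof -
  have "a1 * (s3 * r1 - s1 * r3) - a2 * (s2 * r3 - s3 * r2)
      = s3 * (r1 * a1 + r2 * a2 + r3 * a3) - r3 * (s1 * a1 + s2 * a2 + s3 * a3)"
    by (simp add: algebra_simps)
  then show "a1 * (s3 * r1 - s1 * r3) = a2 * (s2 * r3 - s3 * r2)"
    using assms by simp
  have "a1 * (s1 * r2 - s2 * r1) - a3 * (s2 * r3 - s3 * r2)
      = r2 * (s1 * a1 + s2 * a2 + s3 * a3) - s2 * (r1 * a1 + r2 * a2 + r3 * a3)"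
    by (simp add: algebra_simps)
  then show "a1 * (s1 * r2 - s2 * r1) = a3 * (s2 * r3 - s3 * r2)"
    using assms by simp
qed

lemma proportional_imp_multiple:
  fixes a1 a2 a3 c1 c2 c3 :: "'a :: idom"
  assumes prime: "prime_elem a1" and not_dvd: "\<not> a1 dvd a2"
    and e2: "a1 * c2 = a2 * c1" and e3: "a1 * c3 = a3 * c1"
  shows "\<exists>t. c1 = t * a1 \<and> c2 = t * a2 \<and> c3 = t * a3"
proof -
  have "a1 dvd a2 * c1" using e2 by (metis dvd_triv_left)
  then have "a1 dvd c1" using prime_elem_dvd_multD[OF prime] not_dvd by blast
  then obtain t where t: "c1 = t * a1" by (metis dvd_def mult.commute)
  have nz: "a1 \<noteq> 0" using prime by (simp add: prime_elem_def)
  have "a1 * c2 = a1 * (t * a2)" and "a1 * c3 = a1 * (t * a3)"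
    using e2 e3 t by (simp_all add: algebra_simps)
  then show ?thesis using t nz by auto
qed

lemma X1_minus_1: "X1 - 1 = [:[:[:-1, 1::int:]:]:]"
  unfolding X1_def by (simp add: one_pCons)

lemma X2_minus_1: "X2 - 1 = [:[:[:-1::int:], 1:]:]"
  unfolding X2_def by (simp add: one_pCons)

text \<open>X1 - 1 is a linear polynomial over Z, hence prime in Z[X1], and primality is
  preserved by the constant embeddings into Z[X1][X2][X3].\<close>
lemma prime_X1_minus_1: "prime_elem (X1 - 1)"
proof -
  have "prime_elem [:-1, 1::int:]"
    by (rule prime_elem_linear_poly) auto
  then show ?thesis
    unfolding X1_minus_1 by (simp add: prime_elem_const_poly_iff)
qed

text \<open>A constant (in X2, X3) divides a polynomial only if it divides every
  coefficient; the X2-coefficient of X2 - 1 is the unit 1.\<close>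
lemma X1_minus_1_not_dvd: "\<not> (X1 - 1) dvd (X2 - 1)"
proof
  assume "(X1 - 1) dvd (X2 - 1)"
  then have "\<forall>n m. [:-1, 1::int:] dvd coeff (coeff [:[:[:-1::int:], 1:]:] n) m"
    unfolding X1_minus_1 X2_minus_1 by (simp add: const_poly_dvd_iff)
  then have "[:-1, 1::int:] dvd coeff (coeff [:[:[:-1::int:], 1:]:] 0) 1" by blast
  then have "[:-1, 1::int:] dvd 1" by simp
  then show False by (auto simp: is_unit_poly_iff)
qed

theorem corollary4p11:
  fixes E1 E2 :: equation
  assumes "balanced E1" and "balanced E2"
  shows "\<exists>t :: mpoly3.
           tt x2 x3 E1 E2 = t * (X1 - 1) \<and>
           tt x3 x1 E1 E2 = t * (X2 - 1) \<and>
           tt x1 x2 E1 E2 = t * (X3 - 1)"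
proof -
  note proportional = cross_product_proportional
    [OF balanced_S_orthogonal[OF assms(1)] balanced_S_orthogonal[OF assms(2)]]
  have "tt x2 x3 E1 E2 = S E1 x2 * S E2 x3 - S E1 x3 * S E2 x2"
    and "tt x3 x1 E1 E2 = S E1 x3 * S E2 x1 - S E1 x1 * S E2 x3"
    and "tt x1 x2 E1 E2 = S E1 x1 * S E2 x2 - S E1 x2 * S E2 x1"
    unfolding tt_def by (simp_all add: mult.commute)
  then show ?thesis
    using proportional_imp_multiple[OF prime_X1_minus_1 X1_minus_1_not_dvd proportional]
    by simp
qed

end
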